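(* Let $p>2$ be prime, $q$ a power of $p$, $Q\in\mathbb{F}_q[x]$ a nonzero squarefree polynomial and $r\ge1$ an integer. Then $$\#\{c\in\mathbb{F}_q[x]:\deg c\le r,\ Q\mid c'\}\le\begin{cases}q^{\frac r2+\left(\frac12-\frac1p\right)(r-2\deg Q)+2p},&\deg Q<r<2\deg Q,\\ q^{\frac r2+\frac12(r-2\deg Q)+2p},&r\ge2\deg Q,\end{cases}$$ where $c'$ denotes the formal derivative of $c$. *)

theory Defs
  imports Complex_Main "HOL-Computational_Algebra.Computational_Algebra"
begin

end

theory Submission
  imports Defs
begin

(* The map c \<mapsto> c' mod Q is linear over the base field F_q, so the number of c with deg c \<le> r
   and Q | c' is q^(r+1) divided by the size of its image, and it suffices to bound that image
   from below.  Let Y_n be the set of residues c' mod Q with deg c < n.  In characteristic p we have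
   (x^p c)' = x^p c', so multiplication by x^p maps Y_n into Y_(n+p).  Hence if Y_(n+p) = Y_n, every
   derivative is in Y_n; since Q is squarefree over a perfect field, Q' is invertible modulo Q and
   Y_n is then the set of all residues.  Thus along n, n + p, n + 2p, ... the subspaces Y grow by a
   factor q at every step until they have q^(deg Q) elements.  For t = deg Q div p the derivative is
   injective on polynomials of degree < pt supported on exponents prime to p, and no reduction
   modulo Q takes place, so |Y_(pt)| \<ge> q^((p-1)t).  With s = (r+1) div p this gives an image of size
   at least q^min(deg Q, (p-1)t + (s-t)), and the stated exponents follow by elementary arithmetic. *)

definition supported_polys :: "nat set \<Rightarrow> 'a::zero poly set" where
  "supported_polys A = {c. \<forall>i. coeff c i \<noteq> 0 \<longrightarrow> i \<in> A}"

lemma mem_supported_polys_iff: "c \<in> supported_polys A \<longleftrightarrow> (\<forall>i. i \<notin> A \<longrightarrow> coeff c i = 0)"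
  by (auto simp: supported_polys_def)

lemma supported_polys_mono: "A \<subseteq> B \<Longrightarrow> supported_polys A \<subseteq> supported_polys B"
  by (auto simp: supported_polys_def)

lemma supported_polys_add:
  "c \<in> supported_polys A \<Longrightarrow> c' \<in> supported_polys A \<Longrightarrow> c + c' \<in> supported_polys A"
  by (simp add: mem_supported_polys_iff)

lemma supported_polys_smult: "c \<in> supported_polys A \<Longrightarrow> smult a c \<in> supported_polys A"
  by (simp add: mem_supported_polys_iff)

lemma card_supported_polys:
  assumes "finite A"
  shows "card (supported_polys A :: 'a::{comm_monoid_add,finite} poly set) = card (UNIV :: 'a set) ^ card A"
proof -
  have "bij_betw (\<lambda>c. restrict (coeff c) A) (supported_polys A :: 'a poly set) (A \<rightarrow>\<^sub>E UNIV)"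
  proof (rule bij_betwI')
    fix c c' :: "'a poly" assume "c \<in> supported_polys A" "c' \<in> supported_polys A"
    then show "(restrict (coeff c) A = restrict (coeff c') A) = (c = c')"
      by (auto simp: supported_polys_def poly_eq_iff fun_eq_iff restrict_def) metis
  next
    fix f assume f: "f \<in> A \<rightarrow>\<^sub>E (UNIV :: 'a set)"
    define c where "c = (\<Sum>i\<in>A. monom (f i) i)"
    have coeff_c: "coeff c j = (if j \<in> A then f j else 0)" for j
      using assms by (simp add: c_def coeff_sum)
    show "\<exists>c \<in> supported_polys A. f = restrict (coeff c) A"
      using f by (intro bexI[of _ c]) (auto simp: coeff_c supported_polys_def fun_eq_iff)
  qed (auto simp: supported_polys_def)
  then show ?thesis
    using assms by (simp add: bij_betw_same_card card_funcsetE)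
qed

lemma finite_supported_polys:
  "finite A \<Longrightarrow> finite (supported_polys A :: 'a::{comm_monoid_add,finite} poly set)"
  using card_supported_polys[of A, where 'a='a] card_ge_0_finite by force

lemma supported_polys_lessThan: "supported_polys {..<n} = {c. c = 0 \<or> degree c < n}"
  by (auto simp: supported_polys_def intro: le_degree le_less_trans)

lemma degree_le_eq_supported_polys: "{c. degree c \<le> r} = supported_polys {..<Suc r}"
  by (auto simp: supported_polys_lessThan)

lemma degree_pderiv_le: "degree (pderiv p) \<le> degree p - 1"
proof (rule degree_le, intro allI impI)
  fix n assume "degree p - 1 < n"
  then have "degree p < Suc n" by arith
  then show "coeff (pderiv p) n = 0" by (simp add: coeff_pderiv coeff_eq_0)
qed

lemma surj_power_CHAR:
  assumes "prime p" "CHAR('a::{field,finite}) = p"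
  shows "surj (\<lambda>x::'a. x ^ p)"
proof (rule finite_UNIV_inj_surj)
  show "inj (\<lambda>x::'a. x ^ p)"
  proof (rule injI)
    fix x y :: 'a assume "x ^ p = y ^ p"
    moreover have "((x - y) + y) ^ p = (x - y) ^ p + y ^ p"
      by (rule freshmans_dream) (use assms in auto)
    ultimately show "x = y" by simp
  qed
qed simp

lemma pderiv_eq_0_imp_power_CHAR:
  assumes "prime p" "CHAR('a::{field,finite}) = p" "pderiv (f::'a poly) = 0"
  shows "\<exists>g. f = g ^ p"
proof -
  have p0: "p > 0" using assms(1) prime_gt_0_nat by blast
  have coeff_f: "coeff f n = 0" if "\<not> p dvd n" for n
  proof -
    have "of_nat n * coeff f n = coeff (pderiv f) (n - 1)"
      using that by (cases n) (simp_all add: coeff_pderiv)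
    moreover have "of_nat n \<noteq> (0::'a)" using that assms(2) by (simp add: of_nat_eq_0_iff_char_dvd)
    ultimately show ?thesis using assms(3) by simp
  qed
  obtain root :: "'a \<Rightarrow> 'a" where root: "\<And>b. root b ^ p = b"
    using surj_power_CHAR[OF assms(1,2)] by (metis surj_f_inv_f)
  define g where "g = (\<Sum>j\<le>degree f. monom (root (coeff f (p * j))) j)"
  have "g ^ p = (\<Sum>j\<le>degree f. monom (root (coeff f (p * j))) j ^ p)"
    unfolding g_def by (rule freshmans_dream_sum) (use assms in simp_all)
  also have "\<dots> = (\<Sum>j\<le>degree f. monom (coeff f (p * j)) (p * j))"
    by (simp add: monom_power root mult.commute)
  also have "\<dots> = f"
  proof (rule poly_eqI)
    fix n
    show "coeff (\<Sum>j\<le>degree f. monom (coeff f (p * j)) (p * j)) n = coeff f n"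
    proof (cases "p dvd n")
      case True
      then obtain j0 where n: "n = p * j0" by blast
      have "j0 \<le> n" using p0 n by simp
      then have "coeff f n = 0" if "\<not> j0 \<le> degree f"
        using that by (intro coeff_eq_0) linarith
      then show ?thesis using p0 by (auto simp: coeff_sum n)
    next
      case False
      then have "p * j \<noteq> n" for j by auto
      then show ?thesis using False by (simp add: coeff_sum coeff_f)
    qed
  qed
  finally show ?thesis by (intro exI[of _ g]) simp
qed

lemma irreducible_divisor_exists_poly:
  fixes c :: "'a::field poly"
  assumes "degree c \<noteq> 0"
  shows "\<exists>f. irreducible f \<and> f dvd c"
  using assms
proof (induction "degree c" arbitrary: c rule: less_induct)
  case less
  show ?case
  proof (cases "irreducible c")
    case False
    have "c \<noteq> 0" "\<not> is_unit c" using less.prems by (metis degree_0 is_unit_iff_degree)+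
    with False obtain a b where c: "c = a * b" "\<not> is_unit a" "\<not> is_unit b"
      by (auto simp: irreducible_def)
    then have "a \<noteq> 0" "b \<noteq> 0" using \<open>c \<noteq> 0\<close> by auto
    then have "degree a \<noteq> 0" "degree b \<noteq> 0" using c by (auto simp: is_unit_iff_degree)
    then have "degree a < degree c" using c \<open>a \<noteq> 0\<close> \<open>b \<noteq> 0\<close> by (simp add: degree_mult_eq)
    then obtain f where "irreducible f" "f dvd a" using less \<open>degree a \<noteq> 0\<close> by blast
    then show ?thesis using c by auto
  qed auto
qed

lemma squarefree_imp_coprime_pderiv:
  fixes Q :: "'a::{field,finite} poly"
  assumes "prime p" "CHAR('a) = p" "squarefree Q"
  shows "coprime Q (pderiv Q)"
proof (rule ccontr)
  assume "\<not> coprime Q (pderiv Q)"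
  then obtain c where c: "c dvd Q" "c dvd pderiv Q" "\<not> is_unit c" by (rule not_coprimeE)
  moreover have "c \<noteq> 0" using c(1) assms(3) by auto
  ultimately obtain f where "irreducible f" "f dvd Q" "f dvd pderiv Q"
    using irreducible_divisor_exists_poly is_unit_iff_degree dvd_trans by metis
  then have f: "prime_elem f" "f dvd Q" "f dvd pderiv Q"
    using field_poly_irreducible_imp_prime by blast+
  then obtain g where Q: "Q = f * g" by (auto elim: dvdE)
  have square_dvd_f: "is_unit h" if "h ^ 2 dvd f" for h
    using assms(3) that \<open>f dvd Q\<close> by (meson dvd_trans squarefreeD)
  have "\<not> f dvd g"
    using f(1) Q assms(3) by (auto simp: power2_eq_square squarefreeD prime_elem_def)
  moreover have "f dvd g * pderiv f"
    using f(3) by (simp add: Q pderiv_mult dvd_add_right_iff)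
  ultimately have "f dvd pderiv f" using f(1) prime_elem_dvd_multD by blast
  have "degree f \<noteq> 0"
    using f(1) is_unit_iff_degree prime_elem_def by blast
  then have "pderiv f = 0"
    using \<open>f dvd pderiv f\<close> dvd_imp_degree_le[of f "pderiv f"] degree_pderiv_le[of f] by linarith
  then obtain h where "f = h ^ p" using pderiv_eq_0_imp_power_CHAR assms(1,2) by blast
  moreover have "h ^ 2 dvd h ^ p" using assms(1) prime_ge_2_nat le_imp_power_dvd by blast
  ultimately have "is_unit f" using square_dvd_f[of h] by (simp add: is_unit_power_iff)
  then show False using f(1) by (simp add: prime_elem_def)
qed

(* Polynomials over an arbitrary field are not an instance of the gcd classes, so Bezout's
   identity is derived from a nonzero element of least degree in the ideal (a, b). *)
lemma coprime_imp_bezout_poly: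
  fixes a b :: "'a::field poly"
  assumes "coprime a b"
  shows "\<exists>u v. u * a + v * b = 1"
proof -
  define I where "I = {u * a + v * b | u v. True}"
  have closed: "x - y * z \<in> I" if x: "x \<in> I" and z: "z \<in> I" for x y z
  proof -
    obtain u v where "x = u * a + v * b" using x unfolding I_def by blast
    moreover obtain u' v' where "z = u' * a + v' * b" using z unfolding I_def by blast
    ultimately have "x - y * z = (u - y * u') * a + (v - y * v') * b" by (simp add: algebra_simps)
    then show ?thesis unfolding I_def by blast
  qed
  have "a = 1 * a + 0 * b" "b = 0 * a + 1 * b" by simp_all
  then have ab: "a \<in> I" "b \<in> I" unfolding I_def by blast+
  have "a \<noteq> 0 \<or> b \<noteq> 0" using assms by (metis coprime_0_left_iff not_is_unit_0)
  then have "\<exists>h. h \<in> I \<and> h \<noteq> 0" using ab by blast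
  then obtain g where g: "g \<in> I" "g \<noteq> 0"
    and g_min: "\<And>h. h \<in> I \<and> h \<noteq> 0 \<Longrightarrow> degree g \<le> degree h"
    using ex_has_least_nat[of "\<lambda>h. h \<in> I \<and> h \<noteq> 0" _ degree] by blast
  have "g dvd x" if "x \<in> I" for x
  proof (rule ccontr)
    assume "\<not> g dvd x"
    then have "x mod g \<noteq> 0" by (simp add: dvd_eq_mod_eq_0)
    moreover have "x mod g \<in> I" using closed[OF that g(1), of "x div g"] by (simp add: minus_div_mult_eq_mod)
    ultimately have "degree g \<le> degree (x mod g)" using g_min by blast
    then show False using degree_mod_less'[OF g(2) \<open>x mod g \<noteq> 0\<close>] by simp
  qed
  then have "is_unit g" using coprime_common_divisor[OF assms] ab by blast
  then obtain w where "1 = g * w" by (rule dvdE)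
  moreover obtain u v where "g = u * a + v * b" using g(1) unfolding I_def by blast
  ultimately have "(w * u) * a + (w * v) * b = 1" by (metis distrib_left mult.assoc mult.commute)
  then show ?thesis by blast
qed

definition poly_subspace :: "'a::field poly set \<Rightarrow> bool" where
  "poly_subspace Y \<longleftrightarrow> (\<forall>x\<in>Y. \<forall>y\<in>Y. x + y \<in> Y) \<and> (\<forall>a. \<forall>x\<in>Y. smult a x \<in> Y)"

lemma poly_subspace_diff:
  assumes "poly_subspace Y" "x \<in> Y" "y \<in> Y"
  shows "x - y \<in> Y"
proof -
  have "x + smult (-1) y \<in> Y" using assms unfolding poly_subspace_def by blast
  then show ?thesis by simp
qed

lemma card_poly_subspace_psubset:
  fixes Y Z :: "'a::{field,finite} poly set"
  assumes "poly_subspace Y" "poly_subspace Z" "Y \<subset> Z" "finite Z"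
  shows "card (UNIV :: 'a set) * card Y \<le> card Z"
proof -
  obtain w where w: "w \<in> Z" "w \<notin> Y" using assms(3) by blast
  define f where "f = (\<lambda>(a, y). smult a w + y)"
  have "inj_on f (UNIV \<times> Y)"
  proof (rule inj_onI, clarify)
    fix a b :: 'a and y y' assume y: "y \<in> Y" "y' \<in> Y" and "f (a, y) = f (b, y')"
    then have eq: "smult (a - b) w = y' - y" by (simp add: f_def algebra_simps smult_diff_left)
    have "a = b"
    proof (rule ccontr)
      assume "a \<noteq> b"
      then have "w = smult (inverse (a - b)) (smult (a - b) w)" by simp
      also have "\<dots> = smult (inverse (a - b)) (y' - y)" by (simp only: eq)
      also have "\<dots> \<in> Y"
        using assms(1) poly_subspace_diff[OF assms(1) y(2,1)] by (simp add: poly_subspace_def)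
      finally show False using w(2) by blast
    qed
    then show "a = b \<and> y = y'" using \<open>f (a, y) = f (b, y')\<close> by (simp add: f_def)
  qed
  moreover have "f ` (UNIV \<times> Y) \<subseteq> Z"
  proof clarify
    fix a y assume "y \<in> Y"
    then have "y \<in> Z" "smult a w \<in> Z" using assms(2,3) w(1) by (auto simp: poly_subspace_def)
    then show "f (a, y) \<in> Z" using assms(2) by (simp add: f_def poly_subspace_def)
  qed
  ultimately have "card ((UNIV :: 'a set) \<times> Y) \<le> card Z" using assms(4) by (rule card_inj_on_le)
  then show ?thesis by (simp add: card_cartesian_product)
qed

lemma card_kernel_mult_card_image_le:
  fixes f :: "'a::cancel_semigroup_add \<Rightarrow> 'b::monoid_add"
  assumes "finite P" "\<And>x y. x \<in> P \<Longrightarrow> y \<in> P \<Longrightarrow> x + y \<in> P"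
    and "\<And>x y. f (x + y) = f x + f y"
  shows "card {x \<in> P. f x = 0} * card (f ` P) \<le> card P"
proof -
  define K where "K = {x \<in> P. f x = 0}"
  define s where "s = inv_into P f"
  have s: "s w \<in> P" "f (s w) = w" if "w \<in> f ` P" for w
    using that by (auto simp: s_def inv_into_into f_inv_into_f)
  define g where "g = (\<lambda>(x, w). x + s w)"
  have "inj_on g (K \<times> f ` P)"
  proof (rule inj_onI)
    fix y y' assume y: "y \<in> K \<times> f ` P" and y': "y' \<in> K \<times> f ` P" and eq: "g y = g y'"
    obtain x w x' w' where xw: "y = (x, w)" "y' = (x', w')" by fastforce
    have "f (x + s w) = f (x' + s w')" using eq by (simp add: g_def xw)
    then have "w = w'" using y y' s[of w] s[of w'] by (simp add: K_def assms(3) xw)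
    then show "y = y'" using eq by (simp add: g_def xw)
  qed
  moreover have "g ` (K \<times> f ` P) \<subseteq> P" using s assms(2) by (auto simp: g_def K_def)
  ultimately have "card (K \<times> f ` P) \<le> card P" using assms(1) by (rule card_inj_on_le)
  then show ?thesis by (simp add: K_def card_cartesian_product)
qed

definition pderiv_residues :: "'a::field poly \<Rightarrow> nat \<Rightarrow> 'a poly set" where
  "pderiv_residues Q n = (\<lambda>c. pderiv c mod Q) ` supported_polys {..<n}"

lemma poly_subspace_pderiv_residues:
  fixes Q :: "'a::field poly"
  shows "poly_subspace (pderiv_residues Q n)"
  unfolding poly_subspace_def pderiv_residues_def
proof safe
  fix a and c c' :: "'a poly"
  assume c: "c \<in> supported_polys {..<n}" "c' \<in> supported_polys {..<n}"
  have "pderiv c mod Q + pderiv c' mod Q = pderiv (c + c') mod Q"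
    by (simp add: pderiv_add poly_mod_add_left)
  then show "pderiv c mod Q + pderiv c' mod Q \<in> (\<lambda>c. pderiv c mod Q) ` supported_polys {..<n}"
    using c by (auto intro: supported_polys_add)
  have "smult a (pderiv c mod Q) = pderiv (smult a c) mod Q"
    by (simp add: pderiv_smult mod_smult_left)
  then show "smult a (pderiv c mod Q) \<in> (\<lambda>c. pderiv c mod Q) ` supported_polys {..<n}"
    using c by (auto intro: supported_polys_smult)
qed

lemma pderiv_residues_mono: "m \<le> n \<Longrightarrow> pderiv_residues Q m \<subseteq> pderiv_residues Q n"
  unfolding pderiv_residues_def by (intro image_mono supported_polys_mono) auto

lemma mod_in_supported_polys: "Q \<noteq> 0 \<Longrightarrow> x mod Q \<in> supported_polys {..<degree Q}"
  by (cases "x mod Q = 0") (auto simp: supported_polys_lessThan degree_mod_less')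

lemma pderiv_residues_subset:
  "Q \<noteq> 0 \<Longrightarrow> pderiv_residues Q n \<subseteq> supported_polys {..<degree Q}"
  by (auto simp: pderiv_residues_def mod_in_supported_polys)

lemma finite_pderiv_residues: "finite (pderiv_residues (Q :: 'a::{field,finite} poly) n)"
  by (simp add: pderiv_residues_def finite_supported_polys)

lemma monom_mult_mod_in_pderiv_residues:
  assumes "CHAR('a::field) = p" "z \<in> pderiv_residues (Q::'a poly) n"
  shows "(monom 1 p * z) mod Q \<in> pderiv_residues Q (n + p)"
proof -
  obtain c where c: "c \<in> supported_polys {..<n}" "z = pderiv c mod Q"
    using assms(2) by (auto simp: pderiv_residues_def)
  have "monom 1 p * c \<in> supported_polys {..<n + p}"
    using c(1) by (auto simp: mem_supported_polys_iff coeff_monom_mult)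
  moreover have "pderiv (monom (1::'a) p) = 0"
    by (simp add: pderiv_monom flip: assms(1))
  then have "(monom 1 p * z) mod Q = pderiv (monom 1 p * c) mod Q"
    by (simp add: c(2) pderiv_mult mod_mult_right_eq)
  ultimately show ?thesis by (auto simp: pderiv_residues_def)
qed

lemma pderiv_mod_in_pderiv_residues_if_stable:
  assumes "CHAR('a::field) = p" "p > 0"
    and stable: "pderiv_residues (Q::'a poly) (n + p) \<subseteq> pderiv_residues Q n"
  shows "pderiv c mod Q \<in> pderiv_residues Q n"
proof (induction "degree c" arbitrary: c rule: less_induct)
  case less
  show ?case
  proof (cases "c \<in> supported_polys {..<n + p}")
    case True
    then show ?thesis using stable by (auto simp: pderiv_residues_def)
  next
    case False
    define m where "m = monom (1::'a) p"
    have "degree c \<ge> p" using False by (auto simp: supported_polys_lessThan)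
    then have "degree (c div m) < degree c"
      using assms(2) degree_div_less[of c m] by (simp add: m_def degree_monom_eq)
    then have "pderiv (c div m) mod Q \<in> pderiv_residues Q n" by (rule less)
    then have "(m * (pderiv (c div m) mod Q)) mod Q \<in> pderiv_residues Q (n + p)"
      unfolding m_def by (rule monom_mult_mod_in_pderiv_residues[OF assms(1)])
    then have "(m * pderiv (c div m)) mod Q \<in> pderiv_residues Q n"
      using stable by (auto simp: mod_mult_right_eq)
    moreover have "c mod m = 0 \<or> degree (c mod m) < p"
      using degree_mod_less'[of m c] by (auto simp: m_def degree_monom_eq)
    then have "c mod m \<in> supported_polys {..<n + p}" by (auto simp: supported_polys_lessThan)
    then have "pderiv (c mod m) mod Q \<in> pderiv_residues Q n"
      using stable by (auto simp: pderiv_residues_def)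
    moreover have "pderiv m = 0"
      by (simp add: m_def pderiv_monom flip: assms(1))
    then have "pderiv (m * (c div m) + c mod m) = m * pderiv (c div m) + pderiv (c mod m)"
      by (simp only: pderiv_add pderiv_mult mult_zero_right add_0_right)
    then have "pderiv c mod Q = (m * pderiv (c div m)) mod Q + pderiv (c mod m) mod Q"
      by (simp add: poly_mod_add_left)
    moreover have "\<forall>x\<in>pderiv_residues Q n. \<forall>y\<in>pderiv_residues Q n. x + y \<in> pderiv_residues Q n"
      using poly_subspace_pderiv_residues unfolding poly_subspace_def by blast
    ultimately show ?thesis by simp
  qed
qed

lemma pderiv_residues_eq_if_stable:
  fixes Q :: "'a::field poly"
  assumes "CHAR('a) = p" "p > 0" "Q \<noteq> 0" "u * Q + v * pderiv Q = 1"
    and stable: "pderiv_residues Q (n + p) \<subseteq> pderiv_residues Q n"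
  shows "pderiv_residues Q n = supported_polys {..<degree Q}"
proof
  show "pderiv_residues Q n \<subseteq> supported_polys {..<degree Q}"
    using assms(3) by (rule pderiv_residues_subset)
next
  show "supported_polys {..<degree Q} \<subseteq> pderiv_residues Q n"
  proof
    fix t :: "'a poly" assume "t \<in> supported_polys {..<degree Q}"
    then have "t mod Q = t"
      by (cases "t = 0") (auto simp: supported_polys_lessThan mod_poly_less)
    \<comment> \<open>v is an inverse of Q' modulo Q, so (Q v t)' = Q (v t)' + v t Q' is congruent to t.\<close>
    moreover have "pderiv (Q * (v * t)) - t = Q * (pderiv (v * t) - u * t)"
    proof -
      have "pderiv (Q * (v * t)) - t = pderiv (Q * (v * t)) - t * (u * Q + v * pderiv Q)"
        using assms(4) by simp
      also have "\<dots> = Q * (pderiv (v * t) - u * t)" by (simp add: pderiv_mult algebra_simps)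
      finally show ?thesis .
    qed
    ultimately have "pderiv (Q * (v * t)) mod Q = t"
      by (metis mod_eq_dvd_iff dvd_triv_left)
    with pderiv_mod_in_pderiv_residues_if_stable[OF assms(1,2) stable]
    show "t \<in> pderiv_residues Q n" by metis
  qed
qed

lemma card_pderiv_residues_iterate:
  fixes Q :: "'a::{field,finite} poly"
  assumes "CHAR('a) = p" "p > 0" "Q \<noteq> 0" "u * Q + v * pderiv Q = 1"
  shows "min (card (UNIV :: 'a set) ^ degree Q) (card (pderiv_residues Q n) * card (UNIV :: 'a set) ^ k)
           \<le> card (pderiv_residues Q (n + p * k))"
proof (induction k)
  case 0
  then show ?case by simp
next
  case (Suc k)
  define q where "q = card (UNIV :: 'a set)"
  define Y where "Y = pderiv_residues Q (n + p * k)"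
  have Y_Suc: "pderiv_residues Q (n + p * Suc k) = pderiv_residues Q (n + p * k + p)"
    by (simp add: algebra_simps)
  show ?case
  proof (cases "pderiv_residues Q (n + p * k + p) \<subseteq> Y")
    case True
    then have "Y = supported_polys {..<degree Q}"
      unfolding Y_def using pderiv_residues_eq_if_stable[OF assms] by blast
    moreover have "Y \<subseteq> pderiv_residues Q (n + p * Suc k)"
      unfolding Y_def by (rule pderiv_residues_mono) simp
    ultimately have "pderiv_residues Q (n + p * Suc k) = supported_polys {..<degree Q}"
      using pderiv_residues_subset[OF assms(3)] by blast
    then show ?thesis by (simp add: card_supported_polys)
  next
    case False
    have "Y \<subset> pderiv_residues Q (n + p * k + p)"
      using False pderiv_residues_mono[of "n + p * k" "n + p * k + p" Q] by (auto simp: Y_def)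
    then have step: "q * card Y \<le> card (pderiv_residues Q (n + p * Suc k))"
      unfolding q_def Y_Suc Y_def
      by (intro card_poly_subspace_psubset poly_subspace_pderiv_residues finite_pderiv_residues)
    have "q \<ge> 1" by (simp add: q_def Suc_le_eq finite_UNIV_card_ge_0)
    then have "min (q ^ degree Q) (card (pderiv_residues Q n) * q ^ Suc k)
               \<le> q * min (q ^ degree Q) (card (pderiv_residues Q n) * q ^ k)"
      by (auto simp: min_def mult.left_commute intro: order_trans[OF _ mult_le_mono1[of 1 q]])
    also have "\<dots> \<le> q * card Y" using Suc.IH by (simp add: q_def Y_def)
    finally show ?thesis using step by (simp add: q_def)
  qed
qed

lemma card_non_multiples_lessThan:
  assumes "p > (0::nat)"
  shows "card {i. i < p * t \<and> \<not> p dvd i} = (p - 1) * t"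
proof -
  have "{i. i < p * t \<and> p dvd i} = (\<lambda>j. p * j) ` {..<t}"
    using assms by (auto elim!: dvdE)
  then have "card {i. i < p * t \<and> p dvd i} = t"
    using assms by (simp add: card_image inj_on_def)
  then have "card ({..<p * t} - {i. i < p * t \<and> p dvd i}) = p * t - t"
    by (subst card_Diff_subset) auto
  moreover have "{i. i < p * t \<and> \<not> p dvd i} = {..<p * t} - {i. i < p * t \<and> p dvd i}" by auto
  ultimately show ?thesis by (simp add: diff_mult_distrib)
qed

lemma card_pderiv_residues_ge:
  fixes Q :: "'a::{field,finite} poly"
  assumes "prime p" "CHAR('a) = p" "p * t \<le> degree Q"
  shows "card (UNIV :: 'a set) ^ ((p - 1) * t) \<le> card (pderiv_residues Q (p * t))"
proof -
  have p0: "p > 0" using assms(1) prime_gt_0_nat by blast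
  define A where "A = {i. i < p * t \<and> \<not> p dvd i}"
  define B where "B = (supported_polys A :: 'a poly set)"
  have B_sub: "B \<subseteq> supported_polys {..<p * t}"
    unfolding B_def A_def by (rule supported_polys_mono) auto
  have "inj_on pderiv B"
  proof (rule inj_onI, rule poly_eqI)
    fix c c' i assume c: "c \<in> B" "c' \<in> B" and eq: "pderiv c = pderiv c'"
    show "coeff c i = coeff c' i"
    proof (cases "i \<in> A")
      case True
      then have "\<not> p dvd i" by (simp add: A_def)
      then have "of_nat i \<noteq> (0::'a)" "i = Suc (i - 1)"
        using assms(2) by (simp add: of_nat_eq_0_iff_char_dvd, cases i, simp_all)
      then show ?thesis
        using arg_cong[OF eq, of "\<lambda>f. coeff f (i - 1)"] by (metis coeff_pderiv mult_cancel_left)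
    qed (use c in \<open>auto simp: B_def mem_supported_polys_iff\<close>)
  qed
  moreover have "pderiv ` B \<subseteq> pderiv_residues Q (p * t)"
  proof
    fix x assume "x \<in> pderiv ` B"
    then obtain c where c: "c \<in> B" "x = pderiv c" by blast
    then have "degree c < p * t \<or> c = 0" using B_sub by (auto simp: supported_polys_lessThan)
    then have "degree (pderiv c) < degree Q \<or> pderiv c = 0"
      using degree_pderiv_le[of c] assms(3) by auto
    then have "x = pderiv c mod Q" using c(2) by (auto simp: mod_poly_less)
    then show "x \<in> pderiv_residues Q (p * t)"
      using c(1) B_sub by (auto simp: pderiv_residues_def)
  qed
  ultimately have "card B \<le> card (pderiv_residues Q (p * t))"
    using finite_pderiv_residues by (rule card_inj_on_le)
  moreover have "card B = card (UNIV :: 'a set) ^ ((p - 1) * t)"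
    using card_non_multiples_lessThan[OF p0] by (simp add: B_def A_def card_supported_polys)
  ultimately show ?thesis by simp
qed

lemma min_power_eq_power_min:
  fixes q :: nat
  assumes "q \<ge> 1"
  shows "min (q ^ a) (q ^ b) = q ^ min a b"
proof (cases "a \<le> b")
  case True
  then show ?thesis using assms by (simp add: power_increasing min_absorb1)
next
  case False
  then show ?thesis using assms by (simp add: power_increasing min_absorb2)
qed

lemma card_pderiv_dvd_le:
  fixes Q :: "'a::{field,finite} poly"
  assumes "prime p" "CHAR('a) = p" "squarefree Q"
    and "p * t \<le> degree Q" "t \<le> s" "p * s \<le> r + 1"
  shows "card {c. degree c \<le> r \<and> Q dvd pderiv c}
           \<le> card (UNIV :: 'a set) ^ (r + 1 - min (degree Q) ((p - 1) * t + (s - t)))"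
proof -
  define q where "q = card (UNIV :: 'a set)"
  define \<rho> where "\<rho> = min (degree Q) ((p - 1) * t + (s - t))"
  define T where "T = {c. degree c \<le> r \<and> Q dvd pderiv c}"
  have p0: "p > 0" using assms(1) prime_gt_0_nat by blast
  have q1: "q \<ge> 1" by (simp add: q_def Suc_le_eq finite_UNIV_card_ge_0)
  have "Q \<noteq> 0" using assms(3) by auto
  obtain u v where bezout: "u * Q + v * pderiv Q = 1"
    using coprime_imp_bezout_poly squarefree_imp_coprime_pderiv assms(1-3) by blast
  have "q ^ \<rho> = min (q ^ degree Q) (q ^ ((p - 1) * t) * q ^ (s - t))"
    by (simp add: \<rho>_def min_power_eq_power_min[OF q1] flip: power_add)
  also have "\<dots> \<le> min (q ^ degree Q) (card (pderiv_residues Q (p * t)) * q ^ (s - t))"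
    using card_pderiv_residues_ge[OF assms(1,2,4)] by (intro min.mono mult_le_mono1) (simp_all add: q_def)
  also have "\<dots> \<le> card (pderiv_residues Q (p * t + p * (s - t)))"
    unfolding q_def by (rule card_pderiv_residues_iterate[OF assms(2) p0 \<open>Q \<noteq> 0\<close> bezout])
  also have "\<dots> \<le> card (pderiv_residues Q (Suc r))"
    using assms(5,6) by (intro card_mono finite_pderiv_residues pderiv_residues_mono)
      (simp add: diff_mult_distrib2)
  finally have "card T * q ^ \<rho> \<le> card T * card (pderiv_residues Q (Suc r))"
    by (rule mult_le_mono2)
  also have "\<dots> \<le> q ^ Suc r"
  proof -
    define S where "S = (supported_polys {..<Suc r} :: 'a poly set)"
    have "card {c \<in> S. pderiv c mod Q = 0} * card ((\<lambda>c. pderiv c mod Q) ` S) \<le> card S"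
      by (rule card_kernel_mult_card_image_le)
        (simp_all add: S_def finite_supported_polys supported_polys_add pderiv_add poly_mod_add_left)
    moreover have "{c \<in> S. pderiv c mod Q = 0} = T"
      unfolding S_def T_def degree_le_eq_supported_polys[symmetric] by (auto simp: dvd_eq_mod_eq_0)
    ultimately show ?thesis
      by (simp add: S_def pderiv_residues_def card_supported_polys q_def)
  qed
  also have "\<dots> = q ^ (r + 1 - \<rho>) * q ^ \<rho>"
  proof -
    have "(p - 1) * t \<le> (p - 1) * s" using assms(5) by (rule mult_le_mono2)
    then have "(p - 1) * t + (s - t) \<le> (p - 1) * s + s" by linarith
    also have "\<dots> = p * s" using p0 by (cases p) auto
    finally have "\<rho> \<le> r + 1" using assms(6) by (simp add: \<rho>_def)
    then show ?thesis by (simp flip: power_add)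
  qed
  finally have "card T * q ^ \<rho> \<le> q ^ (r + 1 - \<rho>) * q ^ \<rho>" .
  then show ?thesis using q1 by (simp add: T_def q_def \<rho>_def)
qed

lemma exponent_bound:
  fixes p d r t s :: nat
  assumes "p \<ge> 2" "d \<le> r" "d < p * (t + 1)" "r + 1 < p * (s + 1)" "t \<le> s"
  shows "real (r + 1 - min d ((p - 1) * t + (s - t)))
           \<le> real r - real d + max 0 ((2 * real d - real r) / real p) + 2 * real p"
proof (cases "d \<le> (p - 1) * t + (s - t)")
  case True
  then show ?thesis using assms(1,2) by (simp add: of_nat_diff)
next
  case False
  define B where "B = (p - 1) * t + (s - t)"
  define X where "X = (2 * real d - real r) / real p"
  have p: "real p \<ge> 2" using assms(1) by simp
  have pX: "real p * X = 2 * real d - real r" using p by (simp add: X_def)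
  have "real ((p - 1) * t) = (real p - 1) * real t" "real (s - t) = real s - real t"
    using assms(1,5) by (simp_all add: of_nat_diff)
  then have B: "real B = (real p - 2) * real t + real s" by (simp add: B_def algebra_simps)
  have t: "real p * real t \<ge> real d - real p + 1"
    using assms(3) by (simp add: algebra_simps flip: of_nat_mult)
  have s: "real p * real s \<ge> real r + 2 - real p"
    using assms(4) by (simp add: algebra_simps flip: of_nat_mult)
  have "(real p - 2) * (real p * real t) \<ge> (real p - 2) * (real d - real p + 1)"
    using t p by (intro mult_left_mono) auto
  then have "real p * (real r + 1 - real B) \<le> real p * (real r - real d + X + real p - 1)"
    using s pX by (simp add: B algebra_simps)
  then have "real r + 1 - real B \<le> real r - real d + X + real p - 1"
    using p by simp
  moreover have "real (r + 1 - B) = real r + 1 - real B"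
    using False assms(2) by (simp add: B_def of_nat_diff)
  ultimately show ?thesis using False p by (simp add: B_def X_def)
qed

lemma real_le_powr_of_le_power:
  fixes N q m :: nat
  assumes "N \<le> q ^ m" "real m \<le> e" "q \<ge> 1"
  shows "real N \<le> real q powr e"
proof -
  have "real N \<le> real q ^ m" using assms(1) by (metis of_nat_le_iff of_nat_power)
  also have "\<dots> = real q powr real m" using assms(3) by (simp add: powr_realpow)
  also have "\<dots> \<le> real q powr e" using assms by (intro powr_mono) auto
  finally show ?thesis .
qed

lemma card_pderiv_dvd_le_powr:
  fixes Q :: "'a::{field,finite} poly"
  assumes "prime p" "CHAR('a) = p" "squarefree Q" "degree Q \<le> r"
  shows "real (card {c. degree c \<le> r \<and> Q dvd pderiv c})
           \<le> real (card (UNIV :: 'a set)) powr (real r - real (degree Q)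
                + max 0 ((2 * real (degree Q) - real r) / real p) + 2 * real p)"
proof (rule real_le_powr_of_le_power)
  define d where "d = degree Q"
  define t where "t = d div p"
  define s where "s = (r + 1) div p"
  have p0: "p > 0" using assms(1) prime_gt_0_nat by blast
  have "t \<le> s" using assms(4) by (simp add: d_def t_def s_def div_le_mono)
  then show "card {c. degree c \<le> r \<and> Q dvd pderiv c}
               \<le> card (UNIV :: 'a set) ^ (r + 1 - min d ((p - 1) * t + (s - t)))"
    using card_pderiv_dvd_le[OF assms(1-3), of t s r]
    by (simp add: d_def t_def s_def times_div_less_eq_dividend)
  have "d < t * p + p" "r + 1 < s * p + p"
    using mod_less_divisor[OF p0, of d] mod_less_divisor[OF p0, of "r + 1"]
      div_mult_mod_eq[of d p] div_mult_mod_eq[of "r + 1" p]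
    unfolding t_def s_def by linarith+
  then have "d < p * (t + 1)" "r + 1 < p * (s + 1)" by (simp_all add: algebra_simps)
  then show "real (r + 1 - min d ((p - 1) * t + (s - t)))
               \<le> real r - real d + max 0 ((2 * real d - real r) / real p) + 2 * real p"
    using assms(1,4) \<open>t \<le> s\<close> prime_ge_2_nat by (intro exponent_bound) (auto simp: d_def)
  show "card (UNIV :: 'a set) \<ge> 1" by (simp add: Suc_le_eq finite_UNIV_card_ge_0)
qed

theorem mainTheorem15:
  fixes Q :: "'a :: {field, finite} poly"
    and p q r :: nat
  assumes "prime p" and "p > 2"
    and "CHAR('a) = p"
    and "card (UNIV :: 'a set) = q"
    and "\<exists>k. q = p ^ k"
    and "Q \<noteq> 0" and "squarefree Q"
    and "r \<ge> 1"
  shows "(degree Q < r \<and> r < 2 * degree Q \<longrightarrow>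
           real (card {c :: 'a poly. degree c \<le> r \<and> Q dvd pderiv c})
             \<le> real q powr (real r / 2 + (1/2 - 1 / real p) * (real r - 2 * real (degree Q)) + 2 * real p))
       \<and> (r \<ge> 2 * degree Q \<longrightarrow>
           real (card {c :: 'a poly. degree c \<le> r \<and> Q dvd pderiv c})
             \<le> real q powr (real r / 2 + 1/2 * (real r - 2 * real (degree Q)) + 2 * real p))"
proof -
  define e where "e = real r - real (degree Q) + max 0 ((2 * real (degree Q) - real r) / real p) + 2 * real p"
  have bound: "real (card {c :: 'a poly. degree c \<le> r \<and> Q dvd pderiv c}) \<le> real q powr e"
    if "degree Q \<le> r"
    using card_pderiv_dvd_le_powr[OF assms(1,3,7) that] by (simp add: e_def assms(4))
  show ?thesis
  proof (intro conjI impI)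
    assume r: "degree Q < r \<and> r < 2 * degree Q"
    then have "e = real r / 2 + (1/2 - 1 / real p) * (real r - 2 * real (degree Q)) + 2 * real p"
      using assms(2) by (simp add: e_def max_def field_simps)
    then show "real (card {c :: 'a poly. degree c \<le> r \<and> Q dvd pderiv c})
             \<le> real q powr (real r / 2 + (1/2 - 1 / real p) * (real r - 2 * real (degree Q)) + 2 * real p)"
      using bound r by simp
  next
    assume r: "2 * degree Q \<le> r"
    then have "e = real r / 2 + 1/2 * (real r - 2 * real (degree Q)) + 2 * real p"
      using assms(2) by (simp add: e_def max_def field_simps)
    then show "real (card {c :: 'a poly. degree c \<le> r \<and> Q dvd pderiv c})
             \<le> real q powr (real r / 2 + 1/2 * (real r - 2 * real (degree Q)) + 2 * real p)"
      using bound r by simp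
  qed
qed

end
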